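(* Let $P$ be a probability distribution of a random variable $\xi$, let $\mathcal X\subseteq\mathbb R^d$, and let $\lambda>0$. Assume: (i) for every $\xi$, the loss $x\mapsto \ell(x;\xi)$ is $G$-Lipschitz continuous and $L$-smooth on $\mathcal X$; (ii) $\psi:\mathbb R\to[0,+\infty]$ is convex, $\psi(1)=0$, $\psi(t)=+\infty$ for all $t<0$, and its conjugate $\psi^*(t)=\sup_{s\in\mathbb R}(st-\psi(s))$ is $M$-smooth. Define $$\mathcal L(x,\eta)=\mathbb E_{\xi\sim P}\Big[\lambda\psi^*\Big(\frac{\ell(x;\xi)-\eta}{\lambda}\Big)+\eta\Big],\qquad \Psi(x)=\min_{\eta\in\mathbb R}\mathcal L(x,\eta).$$ Then $\Psi$ is differentiable, and $\nabla\Psi(x)=\nabla_x\mathcal L(x,\eta)$ for any $\eta\in\arg\min_{\eta'\in\mathbb R}\mathcal L(x,\eta')$.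
   Context: $\Psi$ is the (dual form of the) penalized $\psi$-divergence distributionally robust optimization objective $\sup_Q\{\mathbb E_{\xi\sim Q}\ell(x;\xi)-\lambda d_\psi(Q,P)\}$, where $d_\psi(Q,P)=\int\psi(dQ/dP)\,dP$. A function is $L$-smooth if it is differentiable with $L$-Lipschitz gradient. *)

theory Defs
  imports "HOL-Analysis.Analysis" "HOL-Probability.Probability"
begin

definition ereal_convex :: "(real \<Rightarrow> ereal) \<Rightarrow> bool" where
  "ereal_convex \<psi> \<longleftrightarrow>
     (\<forall>s t u. 0 < u \<and> u < 1 \<longrightarrow>
        \<psi> (u * s + (1 - u) * t) \<le> ereal u * \<psi> s + ereal (1 - u) * \<psi> t)"

definition convex_conjugate :: "(real \<Rightarrow> ereal) \<Rightarrow> real \<Rightarrow> ereal" where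
  "convex_conjugate \<psi> t = (SUP s. ereal (s * t) - \<psi> s)"

definition smooth_on :: "real \<Rightarrow> 'a::euclidean_space set \<Rightarrow> ('a \<Rightarrow> real) \<Rightarrow> bool" where
  "smooth_on L S f \<longleftrightarrow>
     (\<exists>g :: 'a \<Rightarrow> 'a.
        (\<forall>x\<in>S. (f has_derivative (\<lambda>h. g x \<bullet> h)) (at x within S)) \<and>
        (\<forall>x\<in>S. \<forall>y\<in>S. norm (g x - g y) \<le> L * norm (x - y)))"

text \<open>The penalized DRO objective L(x,eta) = E_P[lambda psi*((l(x;xi)-eta)/lambda) + eta],
  where the real-valued function phi represents psi*.\<close>
definition dro_L :: "'b measure \<Rightarrow> real \<Rightarrow> (real \<Rightarrow> real) \<Rightarrow> ('a \<Rightarrow> 'b \<Rightarrow> real) \<Rightarrow> 'a \<Rightarrow> real \<Rightarrow> real" where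
  "dro_L P lam \<phi> loss x \<eta> = (\<integral>\<xi>. lam * \<phi> ((loss x \<xi> - \<eta>) / lam) + \<eta> \<partial>P)"

text \<open>Psi(x) = min over eta of L(x,eta) (taken as the infimum; attainment is assumed).\<close>
definition dro_Psi :: "'b measure \<Rightarrow> real \<Rightarrow> (real \<Rightarrow> real) \<Rightarrow> ('a \<Rightarrow> 'b \<Rightarrow> real) \<Rightarrow> 'a \<Rightarrow> real" where
  "dro_Psi P lam \<phi> loss x = (INF \<eta>. dro_L P lam \<phi> loss x \<eta>)"

end

theory Submission
  imports Defs
begin

(*
  Write \<phi> = \<psi>\<^sup>*; it is convex and M-smooth. Fix x and a minimiser \<eta> of L(x, _), and let
  w = \<phi>'((l(x;\<xi>) - \<eta>) / \<lambda>). Convexity and smoothness squeeze the Bregman remainder of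
  \<lambda> \<phi>(_ / \<lambda>) between 0 and a quadratic; integrating gives, with F(y) = E[w (l(y;\<xi>) - l(x;\<xi>))],
    0 \<le> L(y,e) - L(x,\<eta>) - F(y) - (e - \<eta>)(1 - E w) \<le> O(|y - x|\<^sup>2 + (e - \<eta>)\<^sup>2).
  Minimality in \<eta> forces E w = 1, hence
    F(y) \<le> \<Psi>(y) - \<Psi>(x) \<le> L(y,\<eta>) - L(x,\<eta>) \<le> F(y) + O(|y - x|\<^sup>2),
  so \<Psi> and L(_,\<eta>) agree with F to second order at x and share their derivatives.
  F is differentiated under the integral sign by dominated convergence. Since derivatives are
  taken within an arbitrary set X, a per-sample gradient is determined only along the tangent
  directions of X at x; projecting it onto their span yields a measurable, bounded selection.
*)

lemma has_derivative_quadratically_close: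
  fixes h1 h2 :: "'a::real_normed_vector \<Rightarrow> real"
  assumes deriv: "(h2 has_derivative D) (at x within X)"
    and close: "\<And>y. y \<in> X \<Longrightarrow> \<bar>h1 y - h1 x - (h2 y - h2 x)\<bar> \<le> K * (norm (y - x))\<^sup>2"
  shows "(h1 has_derivative D) (at x within X)"
proof -
  define r where "r y = h1 y - h2 y" for y
  have "((\<lambda>y. (r y - r x) /\<^sub>R norm (y - x)) \<longlongrightarrow> 0) (at x within X)"
  proof (rule Lim_null_comparison)
    show "\<forall>\<^sub>F y in at x within X. norm ((r y - r x) /\<^sub>R norm (y - x)) \<le> \<bar>K\<bar> * norm (y - x)"
      unfolding eventually_at_filter
    proof (intro always_eventually allI impI)
      fix y assume "y \<noteq> x" "y \<in> X"
      then have "\<bar>r y - r x\<bar> \<le> K * (norm (y - x))\<^sup>2"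
        using close[of y] by (simp add: r_def algebra_simps)
      also have "\<dots> \<le> \<bar>K\<bar> * norm (y - x) * norm (y - x)"
        by (simp add: power2_eq_square mult.assoc mult_right_mono)
      finally show "norm ((r y - r x) /\<^sub>R norm (y - x)) \<le> \<bar>K\<bar> * norm (y - x)"
        using \<open>y \<noteq> x\<close> by (simp add: abs_mult field_simps)
    qed
    show "((\<lambda>y. \<bar>K\<bar> * norm (y - x)) \<longlongrightarrow> 0) (at x within X)"
      by (auto intro!: tendsto_eq_intros)
  qed
  then have "(r has_derivative (\<lambda>_. 0)) (at x within X)"
    by (simp add: has_derivative_within divide_inverse_commute)
  from has_derivative_add[OF deriv this] show ?thesis
    by (simp add: r_def)
qed

definition tangent_directions :: "'a::real_normed_vector set \<Rightarrow> 'a \<Rightarrow> 'a set" where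
  "tangent_directions X x =
     {u. \<exists>ys. (\<forall>n. ys n \<in> X - {x}) \<and> ys \<longlonglongrightarrow> x \<and> (\<lambda>n. sgn (ys n - x)) \<longlonglongrightarrow> u}"

lemma has_derivative_inner_within_iff:
  fixes f :: "'a::real_inner \<Rightarrow> real"
  shows "(f has_derivative (\<lambda>h. g \<bullet> h)) (at x within X) \<longleftrightarrow>
    ((\<lambda>y. (f y - f x - g \<bullet> (y - x)) / norm (y - x)) \<longlongrightarrow> 0) (at x within X)"
proof -
  have "(\<lambda>y. (1 / norm (y - x)) *\<^sub>R (f y - (f x + g \<bullet> (y - x))))
      = (\<lambda>y. (f y - f x - g \<bullet> (y - x)) / norm (y - x))"
    by (simp add: fun_eq_iff)
  then show ?thesis
    by (simp add: has_derivative_within bounded_linear_inner_right)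
qed

lemma tendsto_difference_quotient_tangent:
  fixes f :: "'a::real_inner \<Rightarrow> real"
  assumes deriv: "(f has_derivative (\<lambda>h. g \<bullet> h)) (at x within X)"
    and ys: "\<And>n. ys n \<in> X - {x}" "ys \<longlonglongrightarrow> x" and dir: "(\<lambda>n. sgn (ys n - x)) \<longlonglongrightarrow> u"
  shows "(\<lambda>n. (f (ys n) - f x) / norm (ys n - x)) \<longlonglongrightarrow> g \<bullet> u"
proof -
  have "(\<lambda>n. (f (ys n) - f x - g \<bullet> (ys n - x)) / norm (ys n - x)) \<longlonglongrightarrow> 0"
    using deriv ys unfolding has_derivative_inner_within_iff tendsto_at_iff_sequentially comp_def
    by blast
  moreover have "(\<lambda>n. g \<bullet> sgn (ys n - x)) \<longlonglongrightarrow> g \<bullet> u"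
    by (intro tendsto_intros dir)
  ultimately have "(\<lambda>n. (f (ys n) - f x - g \<bullet> (ys n - x)) / norm (ys n - x) + g \<bullet> sgn (ys n - x))
      \<longlonglongrightarrow> 0 + g \<bullet> u"
    by (rule tendsto_add)
  moreover have "(f (ys n) - f x - g \<bullet> (ys n - x)) / norm (ys n - x) + g \<bullet> sgn (ys n - x)
      = (f (ys n) - f x) / norm (ys n - x)" for n
    by (simp add: sgn_div_norm inner_scaleR_right divide_inverse algebra_simps)
  ultimately show ?thesis
    by simp
qed

lemma tendsto_inner_sgn_orthogonal_tangent:
  fixes X :: "'a::euclidean_space set"
  assumes orth: "\<And>u. u \<in> tangent_directions X x \<Longrightarrow> v \<bullet> u = 0"
  shows "((\<lambda>y. v \<bullet> sgn (y - x)) \<longlongrightarrow> 0) (at x within X)"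
proof (rule ccontr)
  assume "\<not> ?thesis"
  then obtain e where "e > 0" and "\<not> (\<forall>\<^sub>F y in at x within X. dist (v \<bullet> sgn (y - x)) 0 < e)"
    unfolding tendsto_iff by blast
  then have "\<forall>d>0. \<exists>y\<in>X. y \<noteq> x \<and> dist y x < d \<and> e \<le> \<bar>v \<bullet> sgn (y - x)\<bar>"
    unfolding eventually_at by (simp add: not_less) (meson not_le)
  then have "\<forall>n. \<exists>y. y \<in> X - {x} \<and> dist y x < inverse (Suc n) \<and> e \<le> \<bar>v \<bullet> sgn (y - x)\<bar>"
  proof (intro allI)
    fix n :: nat
    have "inverse (real (Suc n)) > 0" by simp
    then show "\<exists>y. y \<in> X - {x} \<and> dist y x < inverse (Suc n) \<and> e \<le> \<bar>v \<bullet> sgn (y - x)\<bar>"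
      using \<open>\<forall>d>0. _\<close> by blast
  qed
  then obtain ys where ys: "\<And>n. ys n \<in> X - {x}" "\<And>n. dist (ys n) x < inverse (Suc n)"
    and far: "\<And>n. e \<le> \<bar>v \<bullet> sgn (ys n - x)\<bar>"
    by metis
  have "ys \<longlonglongrightarrow> x"
  proof (rule tendsto_dist_iff[THEN iffD2], rule Lim_null_comparison)
    show "\<forall>\<^sub>F n in sequentially. norm (dist (ys n) x) \<le> inverse (Suc n)"
      using ys(2) by (simp add: less_imp_le)
  qed (rule LIMSEQ_inverse_real_of_nat)
  have "sgn (ys n - x) \<in> sphere 0 1" for n
    using ys(1) by (simp add: norm_sgn)
  then obtain l r where "strict_mono r" and l: "((\<lambda>n. sgn (ys n - x)) \<circ> r) \<longlonglongrightarrow> l"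
    using compact_sphere[of 0 1] unfolding compact_def by metis
  have "l \<in> tangent_directions X x"
    unfolding tangent_directions_def
  proof (intro CollectI exI conjI allI)
    show "(ys \<circ> r) n \<in> X - {x}" for n using ys(1) by simp
    show "(ys \<circ> r) \<longlonglongrightarrow> x" using LIMSEQ_subseq_LIMSEQ[OF \<open>ys \<longlonglongrightarrow> x\<close> \<open>strict_mono r\<close>] .
    show "(\<lambda>n. sgn ((ys \<circ> r) n - x)) \<longlonglongrightarrow> l" using l by (simp add: comp_def)
  qed
  have "(\<lambda>n. \<bar>v \<bullet> sgn (ys (r n) - x)\<bar>) \<longlonglongrightarrow> \<bar>v \<bullet> l\<bar>"
    using l by (intro tendsto_intros) (simp add: comp_def)
  then have "e \<le> \<bar>v \<bullet> l\<bar>"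
    by (rule LIMSEQ_le_const) (use far in blast)
  with orth[OF \<open>l \<in> _\<close>] \<open>e > 0\<close> show False by simp
qed

lemma has_derivative_inner_orthogonal_tangent:
  fixes f :: "'a::euclidean_space \<Rightarrow> real"
  assumes deriv: "(f has_derivative (\<lambda>h. g \<bullet> h)) (at x within X)"
    and orth: "\<And>u. u \<in> tangent_directions X x \<Longrightarrow> (g - g') \<bullet> u = 0"
  shows "(f has_derivative (\<lambda>h. g' \<bullet> h)) (at x within X)"
proof -
  have "((\<lambda>y. (f y - f x - g \<bullet> (y - x)) / norm (y - x) + (g - g') \<bullet> sgn (y - x))
      \<longlongrightarrow> 0 + 0) (at x within X)"
    using deriv orth unfolding has_derivative_inner_within_iff
    by (intro tendsto_add tendsto_inner_sgn_orthogonal_tangent)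
  moreover have "(f y - f x - g \<bullet> (y - x)) / norm (y - x) + (g - g') \<bullet> sgn (y - x)
      = (f y - f x - g' \<bullet> (y - x)) / norm (y - x)" for y
    by (simp add: sgn_div_norm inner_diff_left inner_scaleR_right divide_inverse algebra_simps)
  ultimately show ?thesis
    unfolding has_derivative_inner_within_iff by simp
qed

lemma orthonormal_projection_span:
  fixes U :: "'a::euclidean_space set"
  obtains B where "finite B" "B \<subseteq> span U" "\<And>b. b \<in> B \<Longrightarrow> norm b = 1"
    "\<And>g u. u \<in> span U \<Longrightarrow> (g - (\<Sum>b\<in>B. (g \<bullet> b) *\<^sub>R b)) \<bullet> u = 0"
proof -
  obtain B where B: "B \<subseteq> span U" "pairwise orthogonal B" "\<And>b. b \<in> B \<Longrightarrow> norm b = 1"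
    "independent B" "span B = span U"
    using orthonormal_basis_subspace[OF subspace_span] by metis
  have "b \<bullet> b = 1" if "b \<in> B" for b
    using B(3)[OF that] by (simp add: norm_eq_1)
  then have proj: "(\<Sum>b\<in>B. (b \<bullet> g / (b \<bullet> b)) *\<^sub>R b) = (\<Sum>b\<in>B. (g \<bullet> b) *\<^sub>R b)" for g
    by (intro sum.cong) (auto simp: inner_commute)
  have "(g - (\<Sum>b\<in>B. (g \<bullet> b) *\<^sub>R b)) \<bullet> u = 0" if "u \<in> span U" for g u
  proof -
    have "orthogonal u (g - (\<Sum>b\<in>B. (b \<bullet> g / (b \<bullet> b)) *\<^sub>R b))"
      using Gram_Schmidt_step[OF B(2), of u g] that B(5) by simp
    then show ?thesis
      unfolding proj orthogonal_def by (metis inner_commute)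
  qed
  then show ?thesis
    using that[OF independent_imp_finite[OF B(4)] B(1)] B(3) by blast
qed

lemma inner_measurable_bounded_span:
  fixes g :: "'b \<Rightarrow> 'a::real_inner"
  assumes base: "\<And>u. u \<in> U \<Longrightarrow>
      (\<lambda>\<xi>. g \<xi> \<bullet> u) \<in> borel_measurable M \<and> (\<exists>C. \<forall>\<xi>\<in>space M. \<bar>g \<xi> \<bullet> u\<bar> \<le> C)"
    and "v \<in> span U"
  shows "(\<lambda>\<xi>. g \<xi> \<bullet> v) \<in> borel_measurable M \<and> (\<exists>C. \<forall>\<xi>\<in>space M. \<bar>g \<xi> \<bullet> v\<bar> \<le> C)"
    (is "?good v")
  using \<open>v \<in> span U\<close>
proof (rule span_induct)
  show "subspace (Collect ?good)"
  proof (rule subspaceI)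
    fix v w
    assume "v \<in> Collect ?good" "w \<in> Collect ?good"
    then obtain Cv Cw where
      meas: "(\<lambda>\<xi>. g \<xi> \<bullet> v) \<in> borel_measurable M" "(\<lambda>\<xi>. g \<xi> \<bullet> w) \<in> borel_measurable M" and
      bound: "\<forall>\<xi>\<in>space M. \<bar>g \<xi> \<bullet> v\<bar> \<le> Cv" "\<forall>\<xi>\<in>space M. \<bar>g \<xi> \<bullet> w\<bar> \<le> Cw"
      by blast
    have "\<forall>\<xi>\<in>space M. \<bar>g \<xi> \<bullet> (v + w)\<bar> \<le> Cv + Cw"
    proof
      fix \<xi> assume "\<xi> \<in> space M"
      then have "\<bar>g \<xi> \<bullet> v\<bar> \<le> Cv" "\<bar>g \<xi> \<bullet> w\<bar> \<le> Cw"
        using bound by blast+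
      then show "\<bar>g \<xi> \<bullet> (v + w)\<bar> \<le> Cv + Cw"
        using abs_triangle_ineq[of "g \<xi> \<bullet> v" "g \<xi> \<bullet> w"] unfolding inner_add_right by linarith
    qed
    with meas show "v + w \<in> Collect ?good"
      by (simp add: inner_add_right) blast
  next
    fix c :: real and v
    assume "v \<in> Collect ?good"
    then obtain C where
      meas: "(\<lambda>\<xi>. g \<xi> \<bullet> v) \<in> borel_measurable M" and bound: "\<forall>\<xi>\<in>space M. \<bar>g \<xi> \<bullet> v\<bar> \<le> C"
      by blast
    have "\<forall>\<xi>\<in>space M. \<bar>g \<xi> \<bullet> (c *\<^sub>R v)\<bar> \<le> \<bar>c\<bar> * C"
      using bound by (simp add: abs_mult mult_left_mono)
    with meas show "c *\<^sub>R v \<in> Collect ?good"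
      by simp blast
  qed force
qed (use base in blast)

lemma integrable_scaleR_bounded:
  fixes w :: "'b \<Rightarrow> real" and g :: "'b \<Rightarrow> 'a::{banach, second_countable_topology}"
  assumes w: "integrable M w" and g: "g \<in> borel_measurable M"
    and bound: "\<And>\<xi>. \<xi> \<in> space M \<Longrightarrow> norm (g \<xi>) \<le> B"
  shows "integrable M (\<lambda>\<xi>. w \<xi> *\<^sub>R g \<xi>)"
proof (rule Bochner_Integration.integrable_bound)
  show "integrable M (\<lambda>\<xi>. B * \<bar>w \<xi>\<bar>)"
    using w by auto
  show "(\<lambda>\<xi>. w \<xi> *\<^sub>R g \<xi>) \<in> borel_measurable M"
    using borel_measurable_integrable[OF w] g by simp
  show "AE \<xi> in M. norm (w \<xi> *\<^sub>R g \<xi>) \<le> norm (B * \<bar>w \<xi>\<bar>)"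
  proof (rule AE_I2)
    fix \<xi> assume "\<xi> \<in> space M"
    then have "norm (g \<xi>) \<le> \<bar>B\<bar>"
      using bound by (meson abs_ge_self order_trans)
    from mult_left_mono[OF this abs_ge_zero[of "w \<xi>"]]
    show "norm (w \<xi> *\<^sub>R g \<xi>) \<le> norm (B * \<bar>w \<xi>\<bar>)"
      by (simp add: abs_mult mult.commute)
  qed
qed

lemma measurable_bounded_tangent_component:
  fixes M :: "'b measure" and f :: "'a::euclidean_space \<Rightarrow> 'b \<Rightarrow> real"
  assumes x: "x \<in> X"
    and meas: "\<And>y. y \<in> X \<Longrightarrow> (\<lambda>\<xi>. f y \<xi>) \<in> borel_measurable M"
    and lip: "\<And>\<xi> y. \<xi> \<in> space M \<Longrightarrow> y \<in> X \<Longrightarrow> \<bar>f y \<xi> - f x \<xi>\<bar> \<le> G * norm (y - x)"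
    and grad: "\<And>\<xi>. \<xi> \<in> space M \<Longrightarrow> ((\<lambda>y. f y \<xi>) has_derivative (\<lambda>h. g \<xi> \<bullet> h)) (at x within X)"
    and u: "u \<in> tangent_directions X x"
  shows "(\<lambda>\<xi>. g \<xi> \<bullet> u) \<in> borel_measurable M \<and> (\<exists>C. \<forall>\<xi>\<in>space M. \<bar>g \<xi> \<bullet> u\<bar> \<le> C)"
proof -
  obtain ys where ys: "\<And>n. ys n \<in> X - {x}" "ys \<longlonglongrightarrow> x" "(\<lambda>n. sgn (ys n - x)) \<longlonglongrightarrow> u"
    using u unfolding tangent_directions_def by blast
  have lim: "(\<lambda>n. (f (ys n) \<xi> - f x \<xi>) / norm (ys n - x)) \<longlonglongrightarrow> g \<xi> \<bullet> u" if "\<xi> \<in> space M" for \<xi>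
    using tendsto_difference_quotient_tangent[OF grad[OF that] ys] .
  have "(\<lambda>\<xi>. g \<xi> \<bullet> u) \<in> borel_measurable M"
    by (rule borel_measurable_LIMSEQ_real[OF lim]) (use meas x ys(1) in auto)
  moreover have "\<bar>g \<xi> \<bullet> u\<bar> \<le> G" if "\<xi> \<in> space M" for \<xi>
  proof (rule LIMSEQ_le_const2[OF tendsto_rabs[OF lim[OF that]]])
    have "\<bar>(f (ys n) \<xi> - f x \<xi>) / norm (ys n - x)\<bar> \<le> G" for n
      using lip[OF that, of "ys n"] ys(1)[of n] by (simp add: abs_div pos_divide_le_eq)
    then show "\<exists>N. \<forall>n\<ge>N. \<bar>(f (ys n) \<xi> - f x \<xi>) / norm (ys n - x)\<bar> \<le> G"
      by blast
  qed
  ultimately show ?thesis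
    by blast
qed

lemma measurable_gradient_selection:
  fixes M :: "'b measure" and f :: "'a::euclidean_space \<Rightarrow> 'b \<Rightarrow> real"
  assumes x: "x \<in> X"
    and meas: "\<And>y. y \<in> X \<Longrightarrow> (\<lambda>\<xi>. f y \<xi>) \<in> borel_measurable M"
    and lip: "\<And>\<xi> y. \<xi> \<in> space M \<Longrightarrow> y \<in> X \<Longrightarrow> \<bar>f y \<xi> - f x \<xi>\<bar> \<le> G * norm (y - x)"
    and diff: "\<And>\<xi>. \<xi> \<in> space M \<Longrightarrow> \<exists>g. ((\<lambda>y. f y \<xi>) has_derivative (\<lambda>h. g \<bullet> h)) (at x within X)"
  obtains a C where
    "\<And>\<xi>. \<xi> \<in> space M \<Longrightarrow> ((\<lambda>y. f y \<xi>) has_derivative (\<lambda>h. a \<xi> \<bullet> h)) (at x within X)"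
    "a \<in> borel_measurable M" "\<And>\<xi>. \<xi> \<in> space M \<Longrightarrow> norm (a \<xi>) \<le> C"
proof -
  define g where "g \<xi> = (SOME g. ((\<lambda>y. f y \<xi>) has_derivative (\<lambda>h. g \<bullet> h)) (at x within X))" for \<xi>
  have g: "((\<lambda>y. f y \<xi>) has_derivative (\<lambda>h. g \<xi> \<bullet> h)) (at x within X)" if "\<xi> \<in> space M" for \<xi>
    unfolding g_def using someI_ex[OF diff[OF that]] .
  let ?U = "tangent_directions X x"
  obtain B where B: "finite B" "B \<subseteq> span ?U" "\<And>b. b \<in> B \<Longrightarrow> norm b = 1"
    and proj: "\<And>v u. u \<in> span ?U \<Longrightarrow> (v - (\<Sum>b\<in>B. (v \<bullet> b) *\<^sub>R b)) \<bullet> u = 0"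
    using orthonormal_projection_span[of ?U] by blast
  have "\<forall>b\<in>B. \<exists>C. \<forall>\<xi>\<in>space M. \<bar>g \<xi> \<bullet> b\<bar> \<le> C"
    and meas_B: "\<And>b. b \<in> B \<Longrightarrow> (\<lambda>\<xi>. g \<xi> \<bullet> b) \<in> borel_measurable M"
    using inner_measurable_bounded_span[OF measurable_bounded_tangent_component[OF x meas lip g]] B(2)
    by blast+
  then obtain C where C: "\<And>b \<xi>. b \<in> B \<Longrightarrow> \<xi> \<in> space M \<Longrightarrow> \<bar>g \<xi> \<bullet> b\<bar> \<le> C b"
    by metis
  \<comment> \<open>\<open>g\<close> need not be measurable, but its projection onto the tangent span is still a gradient
    and its coordinates are limits of measurable difference quotients.\<close>
  define a where "a \<xi> = (\<Sum>b\<in>B. (g \<xi> \<bullet> b) *\<^sub>R b)" for \<xi>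
  show ?thesis
  proof
    show "((\<lambda>y. f y \<xi>) has_derivative (\<lambda>h. a \<xi> \<bullet> h)) (at x within X)" if "\<xi> \<in> space M" for \<xi>
      using has_derivative_inner_orthogonal_tangent[OF g[OF that]] proj[OF span_base]
      unfolding a_def by blast
    show "a \<in> borel_measurable M"
      unfolding a_def using meas_B by (intro borel_measurable_sum borel_measurable_scaleR) auto
    show "norm (a \<xi>) \<le> (\<Sum>b\<in>B. C b)" if "\<xi> \<in> space M" for \<xi>
    proof -
      have "norm (a \<xi>) \<le> (\<Sum>b\<in>B. norm ((g \<xi> \<bullet> b) *\<^sub>R b))"
        unfolding a_def by (rule norm_sum)
      also have "\<dots> \<le> (\<Sum>b\<in>B. C b)"
        using C[OF _ that] B(3) by (intro sum_mono) simp
      finally show ?thesis .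
    qed
  qed
qed

lemma abs_first_order_remainder_le:
  fixes a v :: "'a::real_inner"
  assumes "\<bar>d\<bar> \<le> G * norm v" and "norm a \<le> C"
  shows "\<bar>d - a \<bullet> v\<bar> \<le> (\<bar>G\<bar> + C) * norm v"
proof -
  have "\<bar>a \<bullet> v\<bar> \<le> C * norm v"
    using Cauchy_Schwarz_ineq2[of a v] assms(2) by (meson mult_right_mono norm_ge_zero order_trans)
  moreover have "G * norm v \<le> \<bar>G\<bar> * norm v"
    by (simp add: mult_right_mono)
  ultimately show ?thesis
    using assms(1) by (simp add: algebra_simps)
qed

lemma has_derivative_weighted_integral:
  fixes M :: "'b measure" and f :: "'a::euclidean_space \<Rightarrow> 'b \<Rightarrow> real" and w :: "'b \<Rightarrow> real"
  assumes x: "x \<in> X" and w: "integrable M w"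
    and meas: "\<And>y. y \<in> X \<Longrightarrow> (\<lambda>\<xi>. f y \<xi>) \<in> borel_measurable M"
    and lip: "\<And>\<xi> y. \<xi> \<in> space M \<Longrightarrow> y \<in> X \<Longrightarrow> \<bar>f y \<xi> - f x \<xi>\<bar> \<le> G * norm (y - x)"
    and grad: "\<And>\<xi>. \<xi> \<in> space M \<Longrightarrow> ((\<lambda>y. f y \<xi>) has_derivative (\<lambda>h. a \<xi> \<bullet> h)) (at x within X)"
    and grad_meas: "a \<in> borel_measurable M"
    and grad_bound: "\<And>\<xi>. \<xi> \<in> space M \<Longrightarrow> norm (a \<xi>) \<le> C"
  shows "((\<lambda>y. \<integral>\<xi>. w \<xi> * (f y \<xi> - f x \<xi>) \<partial>M) has_derivative (\<lambda>h. (\<integral>\<xi>. w \<xi> *\<^sub>R a \<xi> \<partial>M) \<bullet> h))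
    (at x within X)"
proof -
  define A where "A = (\<integral>\<xi>. w \<xi> *\<^sub>R a \<xi> \<partial>M)"
  define F where "F y = (\<integral>\<xi>. w \<xi> * (f y \<xi> - f x \<xi>) \<partial>M)" for y
  define r where "r y \<xi> = w \<xi> * ((f y \<xi> - f x \<xi> - a \<xi> \<bullet> (y - x)) / norm (y - x))" for y \<xi>
  have w_meas: "w \<in> borel_measurable M"
    using w by (rule borel_measurable_integrable)
  have int_A: "integrable M (\<lambda>\<xi>. w \<xi> *\<^sub>R a \<xi>)"
    using integrable_scaleR_bounded[OF w grad_meas grad_bound] .
  have remainder: "(F y - F x - A \<bullet> (y - x)) / norm (y - x) = (\<integral>\<xi>. r y \<xi> \<partial>M)" if "y \<in> X" for y
  proof -
    have "A \<bullet> (y - x) = (\<integral>\<xi>. w \<xi> * (a \<xi> \<bullet> (y - x)) \<partial>M)"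
      using integral_inner_left[of "y - x" M "\<lambda>\<xi>. w \<xi> *\<^sub>R a \<xi>"] int_A by (simp add: A_def)
    moreover have "integrable M (\<lambda>\<xi>. w \<xi> *\<^sub>R (f y \<xi> - f x \<xi>))"
      by (rule integrable_scaleR_bounded[OF w]) (use lip[OF _ that] meas[OF that] meas[OF x] in auto)
    moreover have "integrable M (\<lambda>\<xi>. w \<xi> * (a \<xi> \<bullet> (y - x)))"
      using integrable_inner_left[OF int_A, of "y - x"] by simp
    ultimately have "F y - F x - A \<bullet> (y - x) = (\<integral>\<xi>. w \<xi> * (f y \<xi> - f x \<xi> - a \<xi> \<bullet> (y - x)) \<partial>M)"
      by (simp add: F_def right_diff_distrib flip: Bochner_Integration.integral_diff)
    then show ?thesis
      by (simp add: r_def flip: integral_divide_zero)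
  qed
  have remainder_bound: "\<bar>r y \<xi>\<bar> \<le> \<bar>w \<xi>\<bar> * (\<bar>G\<bar> + C)" if "\<xi> \<in> space M" "y \<in> X" "y \<noteq> x" for y \<xi>
  proof -
    have "\<bar>f y \<xi> - f x \<xi> - a \<xi> \<bullet> (y - x)\<bar> / norm (y - x) \<le> \<bar>G\<bar> + C"
      using abs_first_order_remainder_le[OF lip[OF that(1,2)] grad_bound[OF that(1)]] that(3)
      by (simp add: pos_divide_le_eq)
    from mult_left_mono[OF this abs_ge_zero[of "w \<xi>"]] show ?thesis
      by (simp add: r_def abs_mult)
  qed
  have "((\<lambda>y. (F y - F x - A \<bullet> (y - x)) / norm (y - x)) \<longlongrightarrow> 0) (at x within X)"
    unfolding tendsto_at_iff_sequentially comp_def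
  proof (intro allI impI)
    fix ys assume ys: "\<forall>n. ys n \<in> X - {x}" "ys \<longlonglongrightarrow> x"
    have "(\<lambda>n. \<integral>\<xi>. r (ys n) \<xi> \<partial>M) \<longlonglongrightarrow> (\<integral>\<xi>. 0 \<partial>M)"
    proof (rule integral_dominated_convergence[where w = "\<lambda>\<xi>. \<bar>w \<xi>\<bar> * (\<bar>G\<bar> + C)"])
      show "AE \<xi> in M. (\<lambda>n. r (ys n) \<xi>) \<longlonglongrightarrow> 0"
      proof (rule AE_I2)
        fix \<xi> assume "\<xi> \<in> space M"
        then have "(\<lambda>n. (f (ys n) \<xi> - f x \<xi> - a \<xi> \<bullet> (ys n - x)) / norm (ys n - x)) \<longlonglongrightarrow> 0"
          using grad ys unfolding has_derivative_inner_within_iff tendsto_at_iff_sequentially comp_def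
          by blast
        then show "(\<lambda>n. r (ys n) \<xi>) \<longlonglongrightarrow> 0"
          unfolding r_def by (rule tendsto_mult_right_zero)
      qed
      show "AE \<xi> in M. norm (r (ys n) \<xi>) \<le> \<bar>w \<xi>\<bar> * (\<bar>G\<bar> + C)" for n
        using remainder_bound ys(1) by auto
    qed (use w w_meas meas x ys(1) grad_meas in \<open>auto simp: r_def\<close>)
    then show "(\<lambda>n. (F (ys n) - F x - A \<bullet> (ys n - x)) / norm (ys n - x)) \<longlonglongrightarrow> 0"
      using remainder ys(1) by simp
  qed
  then have "(F has_derivative (\<lambda>h. A \<bullet> h)) (at x within X)"
    by (rule has_derivative_inner_within_iff[THEN iffD2])
  then show ?thesis
    unfolding F_def[abs_def] A_def .
qed

lemma differentiable_weighted_integral: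
  fixes M :: "'b measure" and f :: "'a::euclidean_space \<Rightarrow> 'b \<Rightarrow> real" and w :: "'b \<Rightarrow> real"
  assumes x: "x \<in> X" and w: "integrable M w"
    and meas: "\<And>y. y \<in> X \<Longrightarrow> (\<lambda>\<xi>. f y \<xi>) \<in> borel_measurable M"
    and lip: "\<And>\<xi> y. \<xi> \<in> space M \<Longrightarrow> y \<in> X \<Longrightarrow> \<bar>f y \<xi> - f x \<xi>\<bar> \<le> G * norm (y - x)"
    and diff: "\<And>\<xi>. \<xi> \<in> space M \<Longrightarrow> \<exists>g. ((\<lambda>y. f y \<xi>) has_derivative (\<lambda>h. g \<bullet> h)) (at x within X)"
  shows "(\<lambda>y. \<integral>\<xi>. w \<xi> * (f y \<xi> - f x \<xi>) \<partial>M) differentiable (at x within X)"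
proof -
  obtain a C where
    "\<And>\<xi>. \<xi> \<in> space M \<Longrightarrow> ((\<lambda>y. f y \<xi>) has_derivative (\<lambda>h. a \<xi> \<bullet> h)) (at x within X)"
    "a \<in> borel_measurable M" "\<And>\<xi>. \<xi> \<in> space M \<Longrightarrow> norm (a \<xi>) \<le> C"
    using measurable_gradient_selection[OF x meas lip diff] by blast
  from has_derivative_weighted_integral[OF x w meas lip this] show ?thesis
    unfolding differentiable_def by blast
qed

lemma smooth_on_UNIV_realE:
  fixes \<phi> :: "real \<Rightarrow> real"
  assumes "smooth_on M UNIV \<phi>"
  obtains p where "\<And>t. (\<phi> has_real_derivative p t) (at t)" "M-lipschitz_on UNIV p"
proof -
  from assms obtain g :: "real \<Rightarrow> real"
    where deriv: "\<And>t. (\<phi> has_derivative (\<lambda>h. g t * h)) (at t)"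
      and lip: "\<And>s t. \<bar>g s - g t\<bar> \<le> M * \<bar>s - t\<bar>"
    unfolding smooth_on_def by auto
  have "(\<phi> has_real_derivative g t) (at t)" for t
    using deriv[of t] by (simp add: has_field_derivative_def)
  moreover have "M-lipschitz_on UNIV g"
    using lip[of 1 0] lip by (intro lipschitz_onI) (auto simp: dist_real_def)
  ultimately show ?thesis using that by blast
qed

lemma lipschitz_derivative_taylor_bound:
  fixes \<phi> p :: "real \<Rightarrow> real"
  assumes deriv: "\<And>t. (\<phi> has_real_derivative p t) (at t)" and lip: "M-lipschitz_on UNIV p"
  shows "\<bar>\<phi> b - \<phi> a - p a * (b - a)\<bar> \<le> M * (b - a)\<^sup>2"
proof -
  let ?S = "closed_segment a b"
  have "\<bar>p t - p a\<bar> \<le> M * \<bar>b - a\<bar>" if "t \<in> ?S" for t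
  proof -
    have "\<bar>p t - p a\<bar> \<le> M * \<bar>t - a\<bar>"
      using lipschitz_on_normD[OF lip] by simp
    also have "\<dots> \<le> M * \<bar>b - a\<bar>"
      using segment_bound1[OF that] lipschitz_on_nonneg[OF lip] by (intro mult_left_mono) auto
    finally show ?thesis .
  qed
  moreover have "((\<lambda>t. \<phi> t - p a * t) has_real_derivative p t - p a) (at t within ?S)" for t
    by (auto intro!: derivative_eq_intros DERIV_subset[OF deriv])
  ultimately have "\<bar>(\<phi> b - p a * b) - (\<phi> a - p a * a)\<bar> \<le> M * \<bar>b - a\<bar> * \<bar>b - a\<bar>"
    using field_differentiable_bound[of ?S "\<lambda>t. \<phi> t - p a * t" "\<lambda>t. p t - p a" "M * \<bar>b - a\<bar>" b a]
    by auto
  then show ?thesis by (simp add: power2_eq_square algebra_simps)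
qed

lemma convex_on_convex_conjugate:
  fixes \<psi> :: "real \<Rightarrow> ereal" and \<phi> :: "real \<Rightarrow> real"
  assumes finite_below: "\<And>s. \<psi> s \<noteq> -\<infinity>" and conj: "\<And>t. convex_conjugate \<psi> t = ereal (\<phi> t)"
  shows "convex_on UNIV \<phi>"
proof (rule convex_onI)
  fix u a b :: real assume u: "0 < u" "u < 1"
  have affine_below: "ereal (s * t) - \<psi> s \<le> ereal (\<phi> t)" for s t
    using conj[of t] unfolding convex_conjugate_def by (metis SUP_upper UNIV_I)
  have "ereal (s * ((1 - u) * a + u * b)) - \<psi> s \<le> ereal ((1 - u) * \<phi> a + u * \<phi> b)" for s
  proof (cases "\<psi> s")
    case (real r)
    have "s * a - r \<le> \<phi> a" "s * b - r \<le> \<phi> b"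
      using affine_below[of s a] affine_below[of s b] real by simp_all
    then have "(1 - u) * (s * a - r) + u * (s * b - r) \<le> (1 - u) * \<phi> a + u * \<phi> b"
      using u by (intro add_mono mult_left_mono) auto
    then show ?thesis using real by (simp add: algebra_simps)
  qed (use finite_below in auto)
  then have "convex_conjugate \<psi> ((1 - u) * a + u * b) \<le> ereal ((1 - u) * \<phi> a + u * \<phi> b)"
    unfolding convex_conjugate_def by (rule SUP_least)
  then show "\<phi> ((1 - u) *\<^sub>R a + u *\<^sub>R b) \<le> (1 - u) * \<phi> a + u * \<phi> b"
    using conj by simp
qed simp

lemma linear_plus_quadratic_nonneg_imp_zero:
  fixes c K :: real
  assumes nonneg: "\<And>t. 0 \<le> c * t + K * t\<^sup>2"
  shows "c = 0"
proof (rule ccontr)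
  assume "c \<noteq> 0"
  define s where "s = 1 / (\<bar>K\<bar> + 1)"
  have "0 < s"
    unfolding s_def by simp
  moreover have "K * s < 1"
    using abs_ge_self[of K] unfolding s_def by (simp add: divide_less_eq)
  ultimately have "c\<^sup>2 * s * (K * s - 1) < 0"
    using \<open>c \<noteq> 0\<close> by (intro mult_pos_neg) auto
  also have "c\<^sup>2 * s * (K * s - 1) = c * (- c * s) + K * (- c * s)\<^sup>2"
    by (simp add: power2_eq_square algebra_simps)
  finally show False
    using nonneg[of "- c * s"] by linarith
qed

locale dro_smooth_dual = prob_space P for P :: "'b measure" +
  fixes X :: "'a::euclidean_space set" and loss :: "'a \<Rightarrow> 'b \<Rightarrow> real"
    and \<phi> p :: "real \<Rightarrow> real" and lam G M :: real
  assumes lam_pos: "0 < lam"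
    and loss_lipschitz: "\<And>\<xi>. \<xi> \<in> space P \<Longrightarrow> G-lipschitz_on X (\<lambda>x. loss x \<xi>)"
    and loss_differentiable: "\<And>\<xi> x. \<xi> \<in> space P \<Longrightarrow> x \<in> X \<Longrightarrow>
      \<exists>g. ((\<lambda>y. loss y \<xi>) has_derivative (\<lambda>h. g \<bullet> h)) (at x within X)"
    and loss_measurable: "\<And>x. x \<in> X \<Longrightarrow> (\<lambda>\<xi>. loss x \<xi>) \<in> borel_measurable P"
    and \<phi>_convex: "convex_on UNIV \<phi>"
    and \<phi>_deriv: "\<And>t. (\<phi> has_real_derivative p t) (at t)"
    and p_lipschitz: "M-lipschitz_on UNIV p"
    and \<phi>_integrable: "\<And>x \<eta>. x \<in> X \<Longrightarrow> integrable P (\<lambda>\<xi>. \<phi> ((loss x \<xi> - \<eta>) / lam))"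
begin

abbreviation "\<L> \<equiv> dro_L P lam \<phi> loss"
abbreviation "\<Psi> \<equiv> dro_Psi P lam \<phi> loss"

text \<open>The density of the worst-case distribution with respect to \<open>P\<close>; minimality of \<open>\<eta>\<close> is
  exactly the statement that it integrates to 1.\<close>
definition dual_weight :: "'a \<Rightarrow> real \<Rightarrow> 'b \<Rightarrow> real" where
  "dual_weight x \<eta> \<xi> = p ((loss x \<xi> - \<eta>) / lam)"

definition linearization :: "'a \<Rightarrow> real \<Rightarrow> 'a \<Rightarrow> real" where
  "linearization x \<eta> y = (\<integral>\<xi>. dual_weight x \<eta> \<xi> * (loss y \<xi> - loss x \<xi>) \<partial>P)"

lemma loss_diff_le:
  "\<xi> \<in> space P \<Longrightarrow> x \<in> X \<Longrightarrow> y \<in> X \<Longrightarrow> \<bar>loss y \<xi> - loss x \<xi>\<bar> \<le> G * norm (y - x)"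
  using lipschitz_onD[OF loss_lipschitz] by (simp add: dist_real_def dist_norm)

lemma dro_L_eq: "x \<in> X \<Longrightarrow> \<L> x \<eta> = lam * (\<integral>\<xi>. \<phi> ((loss x \<xi> - \<eta>) / lam) \<partial>P) + \<eta>"
  unfolding dro_L_def using \<phi>_integrable by (simp add: prob_space)

lemma bregman_bounds:
  shows "0 \<le> lam * \<phi> (b / lam) - lam * \<phi> (a / lam) - p (a / lam) * (b - a)"
    and "lam * \<phi> (b / lam) - lam * \<phi> (a / lam) - p (a / lam) * (b - a) \<le> M / lam * (b - a)\<^sup>2"
proof -
  have eq: "lam * \<phi> (b / lam) - lam * \<phi> (a / lam) - p (a / lam) * (b - a)
      = lam * (\<phi> (b / lam) - \<phi> (a / lam) - p (a / lam) * (b / lam - a / lam))"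
    using lam_pos by (simp add: field_simps)
  have "p (a / lam) * (b / lam - a / lam) \<le> \<phi> (b / lam) - \<phi> (a / lam)"
    using convex_on_imp_above_tangent[OF \<phi>_convex, of "a / lam" "b / lam" "p (a / lam)"] \<phi>_deriv
    by simp
  then show "0 \<le> lam * \<phi> (b / lam) - lam * \<phi> (a / lam) - p (a / lam) * (b - a)"
    unfolding eq using lam_pos by simp
  have "lam * (\<phi> (b / lam) - \<phi> (a / lam) - p (a / lam) * (b / lam - a / lam))
      \<le> lam * (M * (b / lam - a / lam)\<^sup>2)"
    using lipschitz_derivative_taylor_bound[OF \<phi>_deriv p_lipschitz] lam_pos
    by (intro mult_left_mono) (auto intro: order_trans[OF abs_ge_self])
  also have "\<dots> = M / lam * (b - a)\<^sup>2"
    using lam_pos by (simp add: power2_eq_square field_simps)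
  finally show "lam * \<phi> (b / lam) - lam * \<phi> (a / lam) - p (a / lam) * (b - a) \<le> M / lam * (b - a)\<^sup>2"
    unfolding eq .
qed

lemma dual_weight_measurable: "x \<in> X \<Longrightarrow> dual_weight x \<eta> \<in> borel_measurable P"
  unfolding dual_weight_def
  by (intro borel_measurable_continuous_on[OF lipschitz_on_continuous_on[OF p_lipschitz]]
      borel_measurable_divide borel_measurable_diff loss_measurable borel_measurable_const)

lemma dual_weight_integrable: "x \<in> X \<Longrightarrow> integrable P (dual_weight x \<eta>)"
proof (rule Bochner_Integration.integrable_bound)
  assume x: "x \<in> X"
  let ?B = "\<lambda>\<xi>. \<bar>\<phi> ((loss x \<xi> - (\<eta> - lam)) / lam)\<bar> + \<bar>\<phi> ((loss x \<xi> - \<eta>) / lam)\<bar> + M"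
  show "integrable P ?B"
    by (intro Bochner_Integration.integrable_add integrable_abs integrable_const \<phi>_integrable[OF x])
  show "dual_weight x \<eta> \<in> borel_measurable P"
    using dual_weight_measurable[OF x] .
  show "AE \<xi> in P. norm (dual_weight x \<eta> \<xi>) \<le> norm (?B \<xi>)"
  proof (rule AE_I2)
    fix \<xi>
    define u where "u = (loss x \<xi> - \<eta>) / lam"
    have shift: "(loss x \<xi> - (\<eta> - lam)) / lam = u + 1"
      using lam_pos by (simp add: u_def field_simps)
    have "\<bar>\<phi> (u + 1) - \<phi> u - p u\<bar> \<le> M"
      using lipschitz_derivative_taylor_bound[OF \<phi>_deriv p_lipschitz, of "u + 1" u] by simp
    then have "\<bar>p u\<bar> \<le> \<bar>\<phi> (u + 1)\<bar> + \<bar>\<phi> u\<bar> + M" "0 \<le> \<bar>\<phi> (u + 1)\<bar> + \<bar>\<phi> u\<bar> + M"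
      by arith+
    then show "norm (dual_weight x \<eta> \<xi>) \<le> norm (?B \<xi>)"
      unfolding dual_weight_def u_def[symmetric] shift by simp
  qed
qed

lemma dro_L_linearization_bounds:
  fixes e \<eta> :: real
  assumes x: "x \<in> X" and y: "y \<in> X"
  defines "R \<equiv> \<L> y e - \<L> x \<eta> - linearization x \<eta> y - (e - \<eta>) * (1 - expectation (dual_weight x \<eta>))"
  shows "0 \<le> R" and "R \<le> 2 * M / lam * ((G * norm (y - x))\<^sup>2 + (e - \<eta>)\<^sup>2)"
proof -
  let ?w = "dual_weight x \<eta>"
  define B where "B \<xi> = lam * \<phi> ((loss y \<xi> - e) / lam) - lam * \<phi> ((loss x \<xi> - \<eta>) / lam)
    - p ((loss x \<xi> - \<eta>) / lam) * ((loss y \<xi> - e) - (loss x \<xi> - \<eta>))" for \<xi>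
  have int_lin: "integrable P (\<lambda>\<xi>. ?w \<xi> *\<^sub>R (loss y \<xi> - loss x \<xi>))"
    by (rule integrable_scaleR_bounded[OF dual_weight_integrable[OF x]])
      (use loss_diff_le[OF _ x y] loss_measurable[OF x] loss_measurable[OF y] in auto)
  have "B = (\<lambda>\<xi>. lam * \<phi> ((loss y \<xi> - e) / lam) - lam * \<phi> ((loss x \<xi> - \<eta>) / lam)
      - ?w \<xi> * (loss y \<xi> - loss x \<xi>) + (e - \<eta>) * ?w \<xi>)"
    by (simp add: fun_eq_iff B_def dual_weight_def algebra_simps)
  then have int_B: "integrable P B" and integral_B: "(\<integral>\<xi>. B \<xi> \<partial>P) = R"
    using \<phi>_integrable[OF x] \<phi>_integrable[OF y] int_lin dual_weight_integrable[OF x]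
    by (simp_all add: R_def dro_L_eq x y linearization_def right_diff_distrib)
  have B_bounds: "0 \<le> B \<xi>" "B \<xi> \<le> 2 * M / lam * ((G * norm (y - x))\<^sup>2 + (e - \<eta>)\<^sup>2)"
    if "\<xi> \<in> space P" for \<xi>
  proof -
    define d where "d = loss y \<xi> - loss x \<xi>"
    have shift: "(loss y \<xi> - e) - (loss x \<xi> - \<eta>) = d - (e - \<eta>)"
      by (simp add: d_def)
    show "0 \<le> B \<xi>"
      unfolding B_def by (rule bregman_bounds(1))
    have "d\<^sup>2 \<le> (G * norm (y - x))\<^sup>2"
      using loss_diff_le[OF that x y] abs_le_square_iff[of d "G * norm (y - x)"]
      by (simp add: d_def)
    then have "(d - (e - \<eta>))\<^sup>2 \<le> 2 * ((G * norm (y - x))\<^sup>2 + (e - \<eta>)\<^sup>2)"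
      using sum_squares_ge_zero[of "d + (e - \<eta>)" 0] by (simp add: power2_eq_square algebra_simps)
    then have "M / lam * (d - (e - \<eta>))\<^sup>2 \<le> M / lam * (2 * ((G * norm (y - x))\<^sup>2 + (e - \<eta>)\<^sup>2))"
      using lipschitz_on_nonneg[OF p_lipschitz] lam_pos by (intro mult_left_mono) auto
    also have "\<dots> = 2 * M / lam * ((G * norm (y - x))\<^sup>2 + (e - \<eta>)\<^sup>2)"
      by simp
    finally have "M / lam * (d - (e - \<eta>))\<^sup>2 \<le> 2 * M / lam * ((G * norm (y - x))\<^sup>2 + (e - \<eta>)\<^sup>2)" .
    with bregman_bounds(2)[of "loss y \<xi> - e" "loss x \<xi> - \<eta>"]
    show "B \<xi> \<le> 2 * M / lam * ((G * norm (y - x))\<^sup>2 + (e - \<eta>)\<^sup>2)"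
      unfolding B_def shift by linarith
  qed
  show "0 \<le> R"
    using integral_ge_const[OF int_B] B_bounds(1) unfolding integral_B by blast
  show "R \<le> 2 * M / lam * ((G * norm (y - x))\<^sup>2 + (e - \<eta>)\<^sup>2)"
    using integral_le_const[OF int_B] B_bounds(2) unfolding integral_B by blast
qed

lemma dual_weight_expectation_eq_1:
  assumes x: "x \<in> X" and min: "\<And>\<eta>'. \<L> x \<eta> \<le> \<L> x \<eta>'"
  shows "expectation (dual_weight x \<eta>) = 1"
proof -
  have "0 \<le> (1 - expectation (dual_weight x \<eta>)) * t + 2 * M / lam * t\<^sup>2" for t
  proof -
    have "\<L> x (\<eta> + t) - \<L> x \<eta> - (1 - expectation (dual_weight x \<eta>)) * t \<le> 2 * M / lam * t\<^sup>2"
      using dro_L_linearization_bounds(2)[OF x x, of "\<eta> + t" \<eta>]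
      by (simp add: linearization_def mult.commute)
    with min[of "\<eta> + t"] show ?thesis
      by linarith
  qed
  then have "1 - expectation (dual_weight x \<eta>) = 0"
    by (rule linear_plus_quadratic_nonneg_imp_zero)
  then show ?thesis
    by simp
qed

lemma dro_Psi_sandwich:
  assumes x: "x \<in> X" and min: "\<And>\<eta>'. \<L> x \<eta> \<le> \<L> x \<eta>'" and y: "y \<in> X"
  shows "linearization x \<eta> y \<le> \<Psi> y - \<Psi> x"
    and "\<Psi> y - \<Psi> x \<le> \<L> y \<eta> - \<L> x \<eta>"
    and "\<L> y \<eta> - \<L> x \<eta> \<le> linearization x \<eta> y + 2 * M / lam * G\<^sup>2 * (norm (y - x))\<^sup>2"
proof -
  have Psi_x: "\<Psi> x = \<L> x \<eta>"
    unfolding dro_Psi_def by (rule cInf_eq_minimum) (use min in auto)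
  have lower: "\<L> x \<eta> + linearization x \<eta> y \<le> \<L> y e" for e
    using dro_L_linearization_bounds(1)[OF x y, of e \<eta>] dual_weight_expectation_eq_1[OF x min]
    by simp
  then have "\<L> x \<eta> + linearization x \<eta> y \<le> \<Psi> y"
    unfolding dro_Psi_def by (rule cINF_greatest[OF UNIV_not_empty])
  then show "linearization x \<eta> y \<le> \<Psi> y - \<Psi> x"
    unfolding Psi_x by simp
  have "\<Psi> y \<le> \<L> y \<eta>"
    unfolding dro_Psi_def by (rule cINF_lower) (use lower in \<open>auto intro!: bdd_belowI2\<close>)
  then show "\<Psi> y - \<Psi> x \<le> \<L> y \<eta> - \<L> x \<eta>"
    unfolding Psi_x by simp
  show "\<L> y \<eta> - \<L> x \<eta> \<le> linearization x \<eta> y + 2 * M / lam * G\<^sup>2 * (norm (y - x))\<^sup>2"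
    using dro_L_linearization_bounds(2)[OF x y, of \<eta> \<eta>]
    by (simp add: power_mult_distrib algebra_simps)
qed

lemma dro_Psi_has_derivative:
  assumes x: "x \<in> X" and min: "\<And>\<eta>'. \<L> x \<eta> \<le> \<L> x \<eta>'"
  shows "(\<lambda>y. \<L> y \<eta>) differentiable (at x within X)"
    and "((\<lambda>y. \<L> y \<eta>) has_derivative D) (at x within X) \<Longrightarrow> (\<Psi> has_derivative D) (at x within X)"
proof -
  let ?K = "2 * M / lam * G\<^sup>2"
  note sandwich = dro_Psi_sandwich[OF x min]
  have "linearization x \<eta> differentiable (at x within X)"
    unfolding linearization_def
    by (rule differentiable_weighted_integral[OF x dual_weight_integrable[OF x] loss_measurable
          loss_diff_le[OF _ x] loss_differentiable[OF _ x]])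
  then obtain D0 where "(linearization x \<eta> has_derivative D0) (at x within X)"
    unfolding differentiable_def by blast
  then have "((\<lambda>y. \<L> y \<eta>) has_derivative D0) (at x within X)"
  proof (rule has_derivative_quadratically_close)
    fix y assume "y \<in> X"
    have "linearization x \<eta> x = 0"
      by (simp add: linearization_def)
    with sandwich[OF \<open>y \<in> X\<close>]
    show "\<bar>\<L> y \<eta> - \<L> x \<eta> - (linearization x \<eta> y - linearization x \<eta> x)\<bar>
        \<le> ?K * (norm (y - x))\<^sup>2"
      by arith
  qed
  then show "(\<lambda>y. \<L> y \<eta>) differentiable (at x within X)"
    unfolding differentiable_def by blast
  assume "((\<lambda>y. \<L> y \<eta>) has_derivative D) (at x within X)"
  then show "(\<Psi> has_derivative D) (at x within X)"
  proof (rule has_derivative_quadratically_close)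
    fix y assume "y \<in> X"
    from sandwich[OF this]
    show "\<bar>\<Psi> y - \<Psi> x - (\<L> y \<eta> - \<L> x \<eta>)\<bar> \<le> ?K * (norm (y - x))\<^sup>2"
      by arith
  qed
qed

end

theorem lemma2p6:
  fixes P :: "'b measure"
    and X :: "'a::euclidean_space set"
    and loss :: "'a \<Rightarrow> 'b \<Rightarrow> real"
    and \<psi> :: "real \<Rightarrow> ereal"
    and \<phi> :: "real \<Rightarrow> real"
    and lam G L M :: real
  assumes P: "prob_space P"
    and lam: "lam > 0"
    and lip: "\<And>\<xi>. \<xi> \<in> space P \<Longrightarrow> G-lipschitz_on X (\<lambda>x. loss x \<xi>)"
    and sm: "\<And>\<xi>. \<xi> \<in> space P \<Longrightarrow> smooth_on L X (\<lambda>x. loss x \<xi>)"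
    and meas: "\<And>x. x \<in> X \<Longrightarrow> (\<lambda>\<xi>. loss x \<xi>) \<in> borel_measurable P"
    and psi_nonneg: "\<And>t. \<psi> t \<ge> 0"
    and psi_convex: "ereal_convex \<psi>"
    and psi_one: "\<psi> 1 = 0"
    and psi_neg: "\<And>t. t < 0 \<Longrightarrow> \<psi> t = \<infinity>"
    and conj: "\<And>t. convex_conjugate \<psi> t = ereal (\<phi> t)"
    and conj_smooth: "smooth_on M UNIV \<phi>"
    and integ: "\<And>x \<eta>. x \<in> X \<Longrightarrow> integrable P (\<lambda>\<xi>. \<phi> ((loss x \<xi> - \<eta>) / lam))"
    and attained: "\<And>x. x \<in> X \<Longrightarrow> \<exists>\<eta>. \<forall>\<eta>'. dro_L P lam \<phi> loss x \<eta> \<le> dro_L P lam \<phi> loss x \<eta>'"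
  shows "(\<forall>x\<in>X. dro_Psi P lam \<phi> loss differentiable (at x within X)) \<and>
         (\<forall>x\<in>X. \<forall>\<eta>. (\<forall>\<eta>'. dro_L P lam \<phi> loss x \<eta> \<le> dro_L P lam \<phi> loss x \<eta>') \<longrightarrow>
            (\<lambda>y. dro_L P lam \<phi> loss y \<eta>) differentiable (at x within X) \<and>
            (\<forall>D. ((\<lambda>y. dro_L P lam \<phi> loss y \<eta>) has_derivative D) (at x within X) \<longrightarrow>
                 (dro_Psi P lam \<phi> loss has_derivative D) (at x within X)))"
proof -
  obtain p where deriv: "\<And>t. (\<phi> has_real_derivative p t) (at t)" and lip_p: "M-lipschitz_on UNIV p"
    using smooth_on_UNIV_realE[OF conj_smooth] by blast
  have "\<psi> s \<noteq> -\<infinity>" for s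
    using psi_nonneg[of s] by auto
  then have "convex_on UNIV \<phi>"
    using convex_on_convex_conjugate conj by blast
  moreover have "\<exists>g. ((\<lambda>y. loss y \<xi>) has_derivative (\<lambda>h. g \<bullet> h)) (at x within X)"
    if "\<xi> \<in> space P" "x \<in> X" for \<xi> x
    using sm[OF that(1)] that(2) unfolding smooth_on_def by blast
  ultimately interpret dro_smooth_dual P X loss \<phi> p lam G M
    by (intro dro_smooth_dual.intro dro_smooth_dual_axioms.intro P lam lip meas deriv lip_p integ)
  show ?thesis
  proof (intro conjI ballI allI impI)
    fix x assume x: "x \<in> X"
    then obtain \<eta> where min: "\<forall>\<eta>'. dro_L P lam \<phi> loss x \<eta> \<le> dro_L P lam \<phi> loss x \<eta>'"
      using attained by blast
    then obtain D where "((\<lambda>y. dro_L P lam \<phi> loss y \<eta>) has_derivative D) (at x within X)"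
      using dro_Psi_has_derivative(1)[OF x] unfolding differentiable_def by blast
    then show "dro_Psi P lam \<phi> loss differentiable (at x within X)"
      using dro_Psi_has_derivative(2)[OF x] min unfolding differentiable_def by blast
  qed (use dro_Psi_has_derivative in blast)+
qed

end
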